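(* Let $\mathcal{A}$ be an abelian category and consider a commutative diagram in $\mathcal{A}$ consisting of exact sequences $Q_1\xrightarrow{a}P_1\xrightarrow{p_1}F_1\to0$ and $Q_2\xrightarrow{d}P_2\xrightarrow{p_2}F_2\to 0$, together with morphisms $b:Q_1\to Q_2$, $c:P_1\to P_2$ and $h:F_1\to F_2$ such that $ca=db$ and $hp_1=p_2c$. Then for any object $M\in\mathcal{A}$ the following are equivalent: (1) the induced map $\mathrm{Hom}(F_2,M)\to\mathrm{Hom}(F_1,M)$, $\psi\mapsto\psi h$, is surjective; (2) let $\mu:Q_1\oplus Q_2\to P_1\oplus Q_2$ be the morphism with components $a:Q_1\to P_1$, $0:Q_2\to P_1$, $b:Q_1\to Q_2$, $-1:Q_2\to Q_2$, and let $\nu:P_1\oplus Q_2\to P_2$ be the morphism with components $c:P_1\to P_2$ and $-d:Q_2\to P_2$; then for every morphism $\varphi:P_1\oplus Q_2\to M$ with $\varphi\mu=0$ there exists a morphism $\gamma:P_2\to M$ with $\gamma\nu=\varphi$. *)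

theory Defs
  imports Main
begin

text \<open>A category with additive structure on hom-sets, given concretely.
  Morphisms carry their domain and codomain. Comp g f is g after f.\<close>

record ('o, 'm) acat =
  Obj  :: "'o set"
  Arr  :: "'m set"
  Dom  :: "'m \<Rightarrow> 'o"
  Cod  :: "'m \<Rightarrow> 'o"
  Id   :: "'o \<Rightarrow> 'm"
  Comp :: "'m \<Rightarrow> 'm \<Rightarrow> 'm"
  Add  :: "'m \<Rightarrow> 'm \<Rightarrow> 'm"
  Zero :: "'o \<Rightarrow> 'o \<Rightarrow> 'm"
  Neg  :: "'m \<Rightarrow> 'm"

definition hom :: "('o, 'm) acat \<Rightarrow> 'o \<Rightarrow> 'o \<Rightarrow> 'm set" where
  "hom C x y = {f \<in> Arr C. Dom C f = x \<and> Cod C f = y}"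

definition category :: "('o, 'm) acat \<Rightarrow> bool" where
  "category C \<longleftrightarrow>
     (\<forall>f \<in> Arr C. Dom C f \<in> Obj C \<and> Cod C f \<in> Obj C) \<and>
     (\<forall>x \<in> Obj C. Id C x \<in> hom C x x) \<and>
     (\<forall>x \<in> Obj C. \<forall>y \<in> Obj C. \<forall>z \<in> Obj C. \<forall>f \<in> hom C x y. \<forall>g \<in> hom C y z.
        Comp C g f \<in> hom C x z) \<and>
     (\<forall>x \<in> Obj C. \<forall>y \<in> Obj C. \<forall>z \<in> Obj C. \<forall>w \<in> Obj C.
        \<forall>f \<in> hom C x y. \<forall>g \<in> hom C y z. \<forall>h \<in> hom C z w.
        Comp C h (Comp C g f) = Comp C (Comp C h g) f) \<and>
     (\<forall>x \<in> Obj C. \<forall>y \<in> Obj C. \<forall>f \<in> hom C x y.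
        Comp C (Id C y) f = f \<and> Comp C f (Id C x) = f)"

definition preadditive :: "('o, 'm) acat \<Rightarrow> bool" where
  "preadditive C \<longleftrightarrow> category C \<and>
     (\<forall>x \<in> Obj C. \<forall>y \<in> Obj C.
        Zero C x y \<in> hom C x y \<and>
        (\<forall>f \<in> hom C x y. \<forall>g \<in> hom C x y. Add C f g \<in> hom C x y) \<and>
        (\<forall>f \<in> hom C x y. Neg C f \<in> hom C x y) \<and>
        (\<forall>f \<in> hom C x y. \<forall>g \<in> hom C x y. \<forall>h \<in> hom C x y.
            Add C (Add C f g) h = Add C f (Add C g h)) \<and>
        (\<forall>f \<in> hom C x y. \<forall>g \<in> hom C x y. Add C f g = Add C g f) \<and>
        (\<forall>f \<in> hom C x y. Add C f (Zero C x y) = f) \<and>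
        (\<forall>f \<in> hom C x y. Add C f (Neg C f) = Zero C x y)) \<and>
     (\<forall>x \<in> Obj C. \<forall>y \<in> Obj C. \<forall>z \<in> Obj C.
        \<forall>f \<in> hom C x y. \<forall>f' \<in> hom C x y. \<forall>g \<in> hom C y z. \<forall>g' \<in> hom C y z.
        Comp C g (Add C f f') = Add C (Comp C g f) (Comp C g f') \<and>
        Comp C (Add C g g') f = Add C (Comp C g f) (Comp C g' f))"

definition mono :: "('o, 'm) acat \<Rightarrow> 'm \<Rightarrow> bool" where
  "mono C f \<longleftrightarrow> f \<in> Arr C \<and>
     (\<forall>x \<in> Obj C. \<forall>g \<in> hom C x (Dom C f). \<forall>g' \<in> hom C x (Dom C f).
        Comp C f g = Comp C f g' \<longrightarrow> g = g')"

definition epi :: "('o, 'm) acat \<Rightarrow> 'm \<Rightarrow> bool" where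
  "epi C f \<longleftrightarrow> f \<in> Arr C \<and>
     (\<forall>x \<in> Obj C. \<forall>g \<in> hom C (Cod C f) x. \<forall>g' \<in> hom C (Cod C f) x.
        Comp C g f = Comp C g' f \<longrightarrow> g = g')"

definition is_kernel :: "('o, 'm) acat \<Rightarrow> 'm \<Rightarrow> 'm \<Rightarrow> bool" where
  "is_kernel C f k \<longleftrightarrow> f \<in> Arr C \<and> k \<in> Arr C \<and> Cod C k = Dom C f \<and>
     Comp C f k = Zero C (Dom C k) (Cod C f) \<and>
     (\<forall>x \<in> Obj C. \<forall>g \<in> hom C x (Dom C f). Comp C f g = Zero C x (Cod C f) \<longrightarrow>
        (\<exists>!u. u \<in> hom C x (Dom C k) \<and> Comp C k u = g))"

definition is_cokernel :: "('o, 'm) acat \<Rightarrow> 'm \<Rightarrow> 'm \<Rightarrow> bool" where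
  "is_cokernel C f q \<longleftrightarrow> f \<in> Arr C \<and> q \<in> Arr C \<and> Dom C q = Cod C f \<and>
     Comp C q f = Zero C (Dom C f) (Cod C q) \<and>
     (\<forall>x \<in> Obj C. \<forall>g \<in> hom C (Cod C f) x. Comp C g f = Zero C (Dom C f) x \<longrightarrow>
        (\<exists>!u. u \<in> hom C (Cod C q) x \<and> Comp C u q = g))"

definition zero_object :: "('o, 'm) acat \<Rightarrow> 'o \<Rightarrow> bool" where
  "zero_object C z \<longleftrightarrow> z \<in> Obj C \<and>
     (\<forall>x \<in> Obj C. (\<exists>!f. f \<in> hom C z x) \<and> (\<exists>!f. f \<in> hom C x z))"

definition is_biproduct :: "('o, 'm) acat \<Rightarrow> 'o \<Rightarrow> 'o \<Rightarrow> 'o \<Rightarrow> 'm \<Rightarrow> 'm \<Rightarrow> 'm \<Rightarrow> 'm \<Rightarrow> bool" where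
  "is_biproduct C A B S i1 i2 p1 p2 \<longleftrightarrow>
     A \<in> Obj C \<and> B \<in> Obj C \<and> S \<in> Obj C \<and>
     i1 \<in> hom C A S \<and> i2 \<in> hom C B S \<and> p1 \<in> hom C S A \<and> p2 \<in> hom C S B \<and>
     Comp C p1 i1 = Id C A \<and> Comp C p2 i2 = Id C B \<and>
     Comp C p1 i2 = Zero C B A \<and> Comp C p2 i1 = Zero C A B \<and>
     Add C (Comp C i1 p1) (Comp C i2 p2) = Id C S"

definition abelian :: "('o, 'm) acat \<Rightarrow> bool" where
  "abelian C \<longleftrightarrow> preadditive C \<and>
     (\<exists>z. zero_object C z) \<and>
     (\<forall>A \<in> Obj C. \<forall>B \<in> Obj C. \<exists>S i1 i2 p1 p2. is_biproduct C A B S i1 i2 p1 p2) \<and>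
     (\<forall>f \<in> Arr C. \<exists>k. is_kernel C f k) \<and>
     (\<forall>f \<in> Arr C. \<exists>q. is_cokernel C f q) \<and>
     (\<forall>f. mono C f \<longrightarrow> (\<exists>g. is_kernel C g f)) \<and>
     (\<forall>f. epi C f \<longrightarrow> (\<exists>g. is_cokernel C g f))"

text \<open>Exactness of  X --f--> Y --g--> Z  at Y: g f = 0 and im f = ker g, expressed as
  coker(f) o ker(g) = 0 (together with g f = 0).\<close>
definition exact :: "('o, 'm) acat \<Rightarrow> 'm \<Rightarrow> 'm \<Rightarrow> bool" where
  "exact C f g \<longleftrightarrow> f \<in> Arr C \<and> g \<in> Arr C \<and> Cod C f = Dom C g \<and>
     Comp C g f = Zero C (Dom C f) (Cod C g) \<and>
     (\<exists>k q. is_kernel C g k \<and> is_cokernel C f q \<and>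
        Comp C q k = Zero C (Dom C k) (Cod C q))"

end

theory Submission
  imports Defs
begin

text \<open>
  A morphism \<phi>: P1 \<oplus> Q2 \<rightarrow> M is determined by its components \<phi> j1 and \<phi> j2.
  Testing against the injections of Q1 \<oplus> Q2, \<phi> \<mu> = 0 says \<phi> j2 = 0 and \<phi> j1 a = 0;
  testing against j1 and j2, \<gamma> \<nu> = \<phi> says \<gamma> c = \<phi> j1 and \<gamma> d = - \<phi> j2. So (2) says that
  every f: P1 \<rightarrow> M with f a = 0 is \<gamma> c for some \<gamma>: P2 \<rightarrow> M with \<gamma> d = 0. As p1 and p2 are
  epimorphisms with kernels the images of a and d, precomposition with p1 (resp. p2) identifies
  Hom(F1, M) (resp. Hom(F2, M)) with the morphisms out of P1 (resp. P2) vanishing on a (resp. d).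
  Under this identification, and using h p1 = p2 c, that condition is exactly surjectivity of
  \<psi> \<mapsto> \<psi> h.
\<close>

locale preadditive_category =
  fixes C :: "('o, 'm) acat"
  assumes preadditive: "preadditive C"
begin

lemma category: "category C"
  using preadditive unfolding preadditive_def by blast

lemma dom_in_Obj [simp]: "f \<in> Arr C \<Longrightarrow> Dom C f \<in> Obj C"
  and cod_in_Obj [simp]: "f \<in> Arr C \<Longrightarrow> Cod C f \<in> Obj C"
  using category unfolding category_def by auto

lemma in_homI: "f \<in> Arr C \<Longrightarrow> f \<in> hom C (Dom C f) (Cod C f)"
  unfolding hom_def by auto

lemma in_homD:
  assumes "f \<in> hom C x y"
  shows "f \<in> Arr C" "Dom C f = x" "Cod C f = y" "x \<in> Obj C" "y \<in> Obj C"
  using assms unfolding hom_def by auto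

text \<open>
  The simp rules below type arrows by Dom and Cod rather than by hom-sets, so that their side
  conditions mention no intermediate object for the simplifier to guess. Composites are
  normalised to left-nested form, which keeps the components \<phi> j of a morphism \<phi> out of a
  biproduct visible as subterms.
\<close>

lemma
  assumes "f \<in> Arr C" "g \<in> Arr C" "Cod C f = Dom C g"
  shows comp_in_Arr [simp]: "Comp C g f \<in> Arr C"
    and dom_comp [simp]: "Dom C (Comp C g f) = Dom C f"
    and cod_comp [simp]: "Cod C (Comp C g f) = Cod C g"
proof -
  have "Comp C g f \<in> hom C (Dom C f) (Cod C g)"
    using category assms in_homI[of f] in_homI[of g] in_homD(4,5) unfolding category_def by metis
  then show "Comp C g f \<in> Arr C" "Dom C (Comp C g f) = Dom C f" "Cod C (Comp C g f) = Cod C g"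
    unfolding hom_def by auto
qed

lemma comp_assoc [simp]:
  assumes "f \<in> Arr C" "g \<in> Arr C" "h \<in> Arr C" "Cod C f = Dom C g" "Cod C g = Dom C h"
  shows "Comp C h (Comp C g f) = Comp C (Comp C h g) f"
  using category assms in_homI[of f] in_homI[of g] in_homI[of h]
  unfolding category_def by (metis dom_in_Obj cod_in_Obj)

lemma
  assumes "f \<in> Arr C"
  shows comp_id_left [simp]: "Cod C f = y \<Longrightarrow> Comp C (Id C y) f = f"
    and comp_id_right [simp]: "Dom C f = x \<Longrightarrow> Comp C f (Id C x) = f"
  using category assms in_homI[of f] unfolding category_def by (metis dom_in_Obj cod_in_Obj)+

lemma id_in_Arr [simp]: "x \<in> Obj C \<Longrightarrow> Id C x \<in> Arr C"
  and dom_id [simp]: "x \<in> Obj C \<Longrightarrow> Dom C (Id C x) = x"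
  and cod_id [simp]: "x \<in> Obj C \<Longrightarrow> Cod C (Id C x) = x"
  using category unfolding category_def hom_def by auto

lemma zero_in_Arr [simp]: "x \<in> Obj C \<Longrightarrow> y \<in> Obj C \<Longrightarrow> Zero C x y \<in> Arr C"
  and dom_zero [simp]: "x \<in> Obj C \<Longrightarrow> y \<in> Obj C \<Longrightarrow> Dom C (Zero C x y) = x"
  and cod_zero [simp]: "x \<in> Obj C \<Longrightarrow> y \<in> Obj C \<Longrightarrow> Cod C (Zero C x y) = y"
  using preadditive unfolding preadditive_def hom_def by auto

lemma
  assumes "f \<in> Arr C" "g \<in> Arr C" "Dom C g = Dom C f" "Cod C g = Cod C f"
  shows add_in_Arr [simp]: "Add C f g \<in> Arr C"
    and dom_add [simp]: "Dom C (Add C f g) = Dom C f"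
    and cod_add [simp]: "Cod C (Add C f g) = Cod C f"
proof -
  have "Add C f g \<in> hom C (Dom C f) (Cod C f)"
    using preadditive assms in_homI[of f] in_homI[of g] in_homD(4,5) unfolding preadditive_def by metis
  then show "Add C f g \<in> Arr C" "Dom C (Add C f g) = Dom C f" "Cod C (Add C f g) = Cod C f"
    unfolding hom_def by auto
qed

lemma
  assumes "f \<in> Arr C"
  shows neg_in_Arr [simp]: "Neg C f \<in> Arr C"
    and dom_neg [simp]: "Dom C (Neg C f) = Dom C f"
    and cod_neg [simp]: "Cod C (Neg C f) = Cod C f"
proof -
  have "Neg C f \<in> hom C (Dom C f) (Cod C f)"
    using preadditive assms in_homI[of f] in_homD(4,5) unfolding preadditive_def by metis
  then show "Neg C f \<in> Arr C" "Dom C (Neg C f) = Dom C f" "Cod C (Neg C f) = Cod C f"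
    unfolding hom_def by auto
qed

lemma add_assoc:
  assumes "f \<in> Arr C" "g \<in> Arr C" "h \<in> Arr C"
    and "Dom C g = Dom C f" "Cod C g = Cod C f" "Dom C h = Dom C f" "Cod C h = Cod C f"
  shows "Add C (Add C f g) h = Add C f (Add C g h)"
  using preadditive assms in_homI[of f] in_homI[of g] in_homI[of h]
  unfolding preadditive_def by (metis dom_in_Obj cod_in_Obj)

lemma add_comm:
  assumes "f \<in> Arr C" "g \<in> Arr C" "Dom C g = Dom C f" "Cod C g = Cod C f"
  shows "Add C f g = Add C g f"
  using preadditive assms in_homI[of f] in_homI[of g]
  unfolding preadditive_def by (metis dom_in_Obj cod_in_Obj)

lemma add_zero_right [simp]:
  assumes "f \<in> Arr C" "Dom C f = x" "Cod C f = y"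
  shows "Add C f (Zero C x y) = f"
  using preadditive assms in_homI[of f] unfolding preadditive_def by (metis dom_in_Obj cod_in_Obj)

lemma add_zero_left [simp]:
  assumes "f \<in> Arr C" "Dom C f = x" "Cod C f = y"
  shows "Add C (Zero C x y) f = f"
  using assms add_comm[of f "Zero C x y"] by auto

lemma add_neg_right:
  assumes "f \<in> Arr C"
  shows "Add C f (Neg C f) = Zero C (Dom C f) (Cod C f)"
  using preadditive assms in_homI[of f] unfolding preadditive_def by (metis dom_in_Obj cod_in_Obj)

lemma comp_add_right [simp]:
  assumes "f \<in> Arr C" "f' \<in> Arr C" "g \<in> Arr C"
    and "Dom C f' = Dom C f" "Cod C f' = Cod C f" "Cod C f = Dom C g"
  shows "Comp C g (Add C f f') = Add C (Comp C g f) (Comp C g f')"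
  using preadditive assms in_homI[of f] in_homI[of f'] in_homI[of g]
  unfolding preadditive_def by (metis dom_in_Obj cod_in_Obj)

lemma comp_add_left [simp]:
  assumes "f \<in> Arr C" "g \<in> Arr C" "g' \<in> Arr C"
    and "Dom C g' = Dom C g" "Cod C g' = Cod C g" "Cod C f = Dom C g"
  shows "Comp C (Add C g g') f = Add C (Comp C g f) (Comp C g' f)"
  using preadditive assms in_homI[of f] in_homI[of g] in_homI[of g']
  unfolding preadditive_def by (metis dom_in_Obj cod_in_Obj)

lemma add_idem_eq_zero:
  assumes "f \<in> Arr C" "Add C f f = f"
  shows "f = Zero C (Dom C f) (Cod C f)"
proof -
  have "Zero C (Dom C f) (Cod C f) = Add C (Add C f f) (Neg C f)"
    using assms by (simp add: add_neg_right)
  also have "\<dots> = Add C f (Add C f (Neg C f))"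
    using assms(1) by (simp add: add_assoc)
  also have "\<dots> = f"
    using assms(1) by (simp add: add_neg_right)
  finally show ?thesis ..
qed

lemma comp_zero_right [simp]:
  assumes "g \<in> Arr C" "Dom C g = y" "x \<in> Obj C"
  shows "Comp C g (Zero C x y) = Zero C x (Cod C g)"
proof -
  have y: "y \<in> Obj C"
    using assms by auto
  have "Comp C g (Add C (Zero C x y) (Zero C x y)) = Add C (Comp C g (Zero C x y)) (Comp C g (Zero C x y))"
    using assms y by (intro comp_add_right) auto
  moreover have "Add C (Zero C x y) (Zero C x y) = Zero C x y"
    using assms y by simp
  ultimately show ?thesis
    using assms y add_idem_eq_zero[of "Comp C g (Zero C x y)"] by simp
qed

lemma comp_zero_left [simp]:
  assumes "f \<in> Arr C" "Cod C f = y" "z \<in> Obj C"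
  shows "Comp C (Zero C y z) f = Zero C (Dom C f) z"
proof -
  have y: "y \<in> Obj C"
    using assms by auto
  have "Comp C (Add C (Zero C y z) (Zero C y z)) f = Add C (Comp C (Zero C y z) f) (Comp C (Zero C y z) f)"
    using assms y by (intro comp_add_left) auto
  moreover have "Add C (Zero C y z) (Zero C y z) = Zero C y z"
    using assms y by simp
  ultimately show ?thesis
    using assms y add_idem_eq_zero[of "Comp C (Zero C y z) f"] by simp
qed

lemma neg_unique:
  assumes "f \<in> Arr C" "g \<in> Arr C" "Dom C g = Dom C f" "Cod C g = Cod C f"
    and "Add C f g = Zero C (Dom C f) (Cod C f)"
  shows "g = Neg C f"
proof -
  have "g = Add C g (Add C f (Neg C f))"
    using assms by (simp add: add_neg_right)
  also have "\<dots> = Add C (Add C f g) (Neg C f)"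
    using assms add_assoc[of g f "Neg C f"] add_comm[of f g] by simp
  also have "\<dots> = Neg C f"
    using assms by simp
  finally show ?thesis .
qed

lemma comp_neg_right [simp]:
  assumes "f \<in> Arr C" "g \<in> Arr C" "Cod C f = Dom C g"
  shows "Comp C g (Neg C f) = Neg C (Comp C g f)"
  using assms by (intro neg_unique) (simp_all flip: comp_add_right add: add_neg_right)

lemma comp_neg_left [simp]:
  assumes "f \<in> Arr C" "g \<in> Arr C" "Cod C f = Dom C g"
  shows "Comp C (Neg C g) f = Neg C (Comp C g f)"
  using assms by (intro neg_unique) (simp_all flip: comp_add_left add: add_neg_right)

lemma neg_zero [simp]: "x \<in> Obj C \<Longrightarrow> y \<in> Obj C \<Longrightarrow> Neg C (Zero C x y) = Zero C x y"
  by (metis add_neg_right add_zero_left neg_in_Arr dom_zero cod_zero zero_in_Arr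
      dom_neg cod_neg)

lemma neg_eq_zero_iff [simp]:
  assumes "f \<in> Arr C" "Dom C f = x" "Cod C f = y"
  shows "Neg C f = Zero C x y \<longleftrightarrow> f = Zero C x y"
  using assms by (metis add_neg_right add_zero_right neg_zero dom_in_Obj cod_in_Obj)

lemma biproduct_simps:
  assumes "is_biproduct C A B S i1 i2 p1 p2"
  shows "A \<in> Obj C" "B \<in> Obj C" "S \<in> Obj C"
    and "i1 \<in> Arr C" "Dom C i1 = A" "Cod C i1 = S"
    and "i2 \<in> Arr C" "Dom C i2 = B" "Cod C i2 = S"
    and "p1 \<in> Arr C" "Dom C p1 = S" "Cod C p1 = A"
    and "p2 \<in> Arr C" "Dom C p2 = S" "Cod C p2 = B"
    and "Comp C p1 i1 = Id C A" "Comp C p2 i2 = Id C B"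
    and "Comp C p1 i2 = Zero C B A" "Comp C p2 i1 = Zero C A B"
    and "\<And>x. x \<in> Arr C \<Longrightarrow> Dom C x = A \<Longrightarrow> Comp C (Comp C x p1) i1 = x"
    and "\<And>x. x \<in> Arr C \<Longrightarrow> Dom C x = B \<Longrightarrow> Comp C (Comp C x p2) i2 = x"
    and "\<And>x. x \<in> Arr C \<Longrightarrow> Dom C x = A \<Longrightarrow> Comp C (Comp C x p1) i2 = Zero C B (Cod C x)"
    and "\<And>x. x \<in> Arr C \<Longrightarrow> Dom C x = B \<Longrightarrow> Comp C (Comp C x p2) i1 = Zero C A (Cod C x)"
proof -
  show arrows: "A \<in> Obj C" "B \<in> Obj C" "S \<in> Obj C"
    "i1 \<in> Arr C" "Dom C i1 = A" "Cod C i1 = S"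
    "i2 \<in> Arr C" "Dom C i2 = B" "Cod C i2 = S"
    "p1 \<in> Arr C" "Dom C p1 = S" "Cod C p1 = A"
    "p2 \<in> Arr C" "Dom C p2 = S" "Cod C p2 = B"
    and eqs: "Comp C p1 i1 = Id C A" "Comp C p2 i2 = Id C B"
    "Comp C p1 i2 = Zero C B A" "Comp C p2 i1 = Zero C A B"
    using assms unfolding is_biproduct_def hom_def by auto
  show "\<And>x. x \<in> Arr C \<Longrightarrow> Dom C x = A \<Longrightarrow> Comp C (Comp C x p1) i1 = x"
    and "\<And>x. x \<in> Arr C \<Longrightarrow> Dom C x = B \<Longrightarrow> Comp C (Comp C x p2) i2 = x"
    and "\<And>x. x \<in> Arr C \<Longrightarrow> Dom C x = A \<Longrightarrow> Comp C (Comp C x p1) i2 = Zero C B (Cod C x)"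
    and "\<And>x. x \<in> Arr C \<Longrightarrow> Dom C x = B \<Longrightarrow> Comp C (Comp C x p2) i1 = Zero C A (Cod C x)"
    using arrows eqs by (simp_all del: comp_assoc add: comp_assoc[symmetric])
qed

lemma biproduct_decomposition:
  assumes "is_biproduct C A B S i1 i2 p1 p2" "f \<in> Arr C" "Dom C f = S"
  shows "f = Add C (Comp C (Comp C f i1) p1) (Comp C (Comp C f i2) p2)"
proof -
  note simps = biproduct_simps[OF assms(1)]
  have "f = Comp C f (Add C (Comp C i1 p1) (Comp C i2 p2))"
    using assms unfolding is_biproduct_def by simp
  also have "\<dots> = Add C (Comp C (Comp C f i1) p1) (Comp C (Comp C f i2) p2)"
    using assms(2,3) simps by simp
  finally show ?thesis .
qed

lemma biproduct_ext:
  assumes "is_biproduct C A B S i1 i2 p1 p2"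
    and "f \<in> Arr C" "Dom C f = S" "g \<in> Arr C" "Dom C g = S"
    and "Comp C f i1 = Comp C g i1" "Comp C f i2 = Comp C g i2"
  shows "f = g"
  using assms biproduct_decomposition[OF assms(1)] by metis

lemma comp_mu_eq_zero_iff:
  assumes a: "a \<in> hom C Q1 P1" and b: "b \<in> hom C Q1 Q2"
    and S1: "is_biproduct C Q1 Q2 S1 i1 i2 r1 r2"
    and S2: "is_biproduct C P1 Q2 S2 j1 j2 s1 s2"
    and \<phi>: "\<phi> \<in> hom C S2 M"
  defines "\<mu> \<equiv> Add C (Comp C j1 (Comp C a r1)) (Add C (Comp C j2 (Comp C b r1)) (Neg C (Comp C j2 r2)))"
  shows "Comp C \<phi> \<mu> = Zero C S1 M \<longleftrightarrow>
    Comp C (Comp C \<phi> j1) a = Zero C Q1 M \<and> Comp C \<phi> j2 = Zero C Q2 M"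
proof -
  note simps = in_homD[OF a] in_homD[OF b] in_homD(5)[OF \<phi>] biproduct_simps[OF S1] biproduct_simps[OF S2]
  have in1: "Comp C (Comp C \<phi> \<mu>) i1 = Add C (Comp C (Comp C \<phi> j1) a) (Comp C (Comp C \<phi> j2) b)"
    and in2: "Comp C (Comp C \<phi> \<mu>) i2 = Neg C (Comp C \<phi> j2)"
    and hom: "Comp C \<phi> \<mu> \<in> hom C S1 M"
    using \<phi> by (simp_all add: \<mu>_def hom_def simps)
  show ?thesis
  proof
    assume \<phi>\<mu>: "Comp C \<phi> \<mu> = Zero C S1 M"
    then have "Neg C (Comp C \<phi> j2) = Zero C Q2 M"
      using in2 by (simp add: simps)
    then have "Comp C \<phi> j2 = Zero C Q2 M"
      using \<phi> by (simp add: hom_def simps)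
    with \<phi>\<mu> in1 \<phi> show "Comp C (Comp C \<phi> j1) a = Zero C Q1 M \<and> Comp C \<phi> j2 = Zero C Q2 M"
      by (simp add: hom_def simps)
  next
    assume "Comp C (Comp C \<phi> j1) a = Zero C Q1 M \<and> Comp C \<phi> j2 = Zero C Q2 M"
    then show "Comp C \<phi> \<mu> = Zero C S1 M"
      by (intro biproduct_ext[OF S1, where g = "Zero C S1 M"]) (use in1 in2 hom in \<open>simp_all add: hom_def simps\<close>)
  qed
qed

lemma comp_nu_eq_iff:
  assumes c: "c \<in> hom C P1 P2" and d: "d \<in> hom C Q2 P2"
    and S2: "is_biproduct C P1 Q2 S2 j1 j2 s1 s2"
    and \<gamma>: "\<gamma> \<in> hom C P2 M" and \<phi>: "\<phi> \<in> hom C S2 M"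
  defines "\<nu> \<equiv> Add C (Comp C c s1) (Neg C (Comp C d s2))"
  shows "Comp C \<gamma> \<nu> = \<phi> \<longleftrightarrow> Comp C \<gamma> c = Comp C \<phi> j1 \<and> Neg C (Comp C \<gamma> d) = Comp C \<phi> j2"
proof -
  note simps = in_homD[OF c] in_homD[OF d] in_homD(5)[OF \<gamma>] biproduct_simps[OF S2]
  have in1: "Comp C (Comp C \<gamma> \<nu>) j1 = Comp C \<gamma> c"
    and in2: "Comp C (Comp C \<gamma> \<nu>) j2 = Neg C (Comp C \<gamma> d)"
    and hom: "Comp C \<gamma> \<nu> \<in> hom C S2 M"
    using \<gamma> by (simp_all add: \<nu>_def hom_def simps)
  show ?thesis
  proof
    assume "Comp C \<gamma> \<nu> = \<phi>"
    with in1 in2 show "Comp C \<gamma> c = Comp C \<phi> j1 \<and> Neg C (Comp C \<gamma> d) = Comp C \<phi> j2"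
      by simp
  next
    assume "Comp C \<gamma> c = Comp C \<phi> j1 \<and> Neg C (Comp C \<gamma> d) = Comp C \<phi> j2"
    then show "Comp C \<gamma> \<nu> = \<phi>"
      by (intro biproduct_ext[OF S2, where g = \<phi>]) (use in1 in2 hom \<phi> in \<open>simp_all add: hom_def\<close>)
  qed
qed

lemma biproduct_factorization_iff_extension:
  assumes a: "a \<in> hom C Q1 P1" and b: "b \<in> hom C Q1 Q2"
    and c: "c \<in> hom C P1 P2" and d: "d \<in> hom C Q2 P2"
    and M: "M \<in> Obj C"
    and S1: "is_biproduct C Q1 Q2 S1 i1 i2 r1 r2"
    and S2: "is_biproduct C P1 Q2 S2 j1 j2 s1 s2"
  defines "\<mu> \<equiv> Add C (Comp C j1 (Comp C a r1)) (Add C (Comp C j2 (Comp C b r1)) (Neg C (Comp C j2 r2)))"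
    and "\<nu> \<equiv> Add C (Comp C c s1) (Neg C (Comp C d s2))"
  shows "(\<forall>\<phi> \<in> hom C S2 M. Comp C \<phi> \<mu> = Zero C S1 M \<longrightarrow> (\<exists>\<gamma> \<in> hom C P2 M. Comp C \<gamma> \<nu> = \<phi>)) \<longleftrightarrow>
    (\<forall>f \<in> hom C P1 M. Comp C f a = Zero C Q1 M \<longrightarrow>
      (\<exists>\<gamma> \<in> hom C P2 M. Comp C \<gamma> c = f \<and> Comp C \<gamma> d = Zero C Q2 M))"
proof -
  note simps = in_homD[OF a] in_homD[OF c] in_homD[OF d] M biproduct_simps[OF S2]
  note \<mu>_iff = comp_mu_eq_zero_iff[OF a b S1 S2, folded \<mu>_def]
  note \<nu>_iff = comp_nu_eq_iff[OF c d S2, folded \<nu>_def]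
  show ?thesis
  proof (intro iffI ballI impI)
    fix f assume factor: "\<forall>\<phi> \<in> hom C S2 M. Comp C \<phi> \<mu> = Zero C S1 M \<longrightarrow> (\<exists>\<gamma> \<in> hom C P2 M. Comp C \<gamma> \<nu> = \<phi>)"
      and f: "f \<in> hom C P1 M" and fa: "Comp C f a = Zero C Q1 M"
    have \<phi>: "Comp C f s1 \<in> hom C S2 M" and \<phi>j1: "Comp C (Comp C f s1) j1 = f"
      and \<phi>j2: "Comp C (Comp C f s1) j2 = Zero C Q2 M"
      using f by (simp_all add: hom_def simps)
    with fa have "Comp C (Comp C f s1) \<mu> = Zero C S1 M"
      by (simp add: \<mu>_iff)
    with \<phi> factor obtain \<gamma> where \<gamma>: "\<gamma> \<in> hom C P2 M" "Comp C \<gamma> \<nu> = Comp C f s1"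
      by blast
    with \<phi> \<phi>j1 \<phi>j2 have "Comp C \<gamma> c = f" "Comp C \<gamma> d = Zero C Q2 M"
      by (simp_all add: \<nu>_iff hom_def simps)
    with \<gamma>(1) show "\<exists>\<gamma> \<in> hom C P2 M. Comp C \<gamma> c = f \<and> Comp C \<gamma> d = Zero C Q2 M"
      by blast
  next
    fix \<phi> assume extension: "\<forall>f \<in> hom C P1 M. Comp C f a = Zero C Q1 M \<longrightarrow>
        (\<exists>\<gamma> \<in> hom C P2 M. Comp C \<gamma> c = f \<and> Comp C \<gamma> d = Zero C Q2 M)"
      and \<phi>: "\<phi> \<in> hom C S2 M" and \<phi>\<mu>: "Comp C \<phi> \<mu> = Zero C S1 M"
    then have "Comp C (Comp C \<phi> j1) a = Zero C Q1 M" and \<phi>j2: "Comp C \<phi> j2 = Zero C Q2 M"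
      by (simp_all add: \<mu>_iff)
    moreover have "Comp C \<phi> j1 \<in> hom C P1 M"
      using \<phi> by (simp add: hom_def simps)
    ultimately obtain \<gamma> where \<gamma>: "\<gamma> \<in> hom C P2 M" "Comp C \<gamma> c = Comp C \<phi> j1" "Comp C \<gamma> d = Zero C Q2 M"
      using extension by blast
    with \<phi> \<phi>j2 have "Comp C \<gamma> \<nu> = \<phi>"
      by (simp add: \<nu>_iff simps)
    with \<gamma>(1) show "\<exists>\<gamma> \<in> hom C P2 M. Comp C \<gamma> \<nu> = \<phi>"
      by blast
  qed
qed

lemma exact_comp_eq_zero:
  assumes "exact C f g" "f \<in> hom C x y" "g \<in> hom C y z"
  shows "Comp C g f = Zero C x z"
  using assms unfolding exact_def hom_def by auto

lemma exact_vanish_on_kernel: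
  assumes "exact C a p"
    and "g \<in> Arr C" "Dom C g = Cod C a" "Comp C g a = Zero C (Dom C a) (Cod C g)"
    and "x \<in> Arr C" "Cod C x = Dom C p" "Comp C p x = Zero C (Dom C x) (Cod C p)"
  shows "Comp C g x = Zero C (Dom C x) (Cod C g)"
proof -
  obtain k q where k: "is_kernel C p k" and q: "is_cokernel C a q"
    and qk: "Comp C q k = Zero C (Dom C k) (Cod C q)"
    using assms(1) unfolding exact_def by blast
  obtain u where u: "u \<in> hom C (Dom C x) (Dom C k)" "Comp C k u = x"
    using k assms(5-7) in_homI[of x] unfolding is_kernel_def by (metis dom_in_Obj)
  obtain v where v: "v \<in> hom C (Cod C q) (Cod C g)" "Comp C v q = g"
    using q assms(2-4) in_homI[of g] unfolding is_cokernel_def by (metis cod_in_Obj)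
  have arrows: "k \<in> Arr C" "q \<in> Arr C" "Cod C k = Dom C q"
    using assms(1) k q unfolding exact_def is_kernel_def is_cokernel_def by auto
  have "Comp C g x = Comp C (Comp C v q) (Comp C k u)"
    by (simp only: u(2) v(2))
  also have "\<dots> = Comp C v (Comp C (Comp C q k) u)"
    using u(1) v(1) arrows unfolding hom_def by (simp del: comp_assoc add: comp_assoc[symmetric])
  also have "\<dots> = Zero C (Dom C x) (Cod C g)"
    using u(1) v(1) arrows qk assms(5) unfolding hom_def by simp
  finally show ?thesis .
qed

end

locale abelian_category =
  fixes C :: "('o, 'm) acat"
  assumes abelian: "abelian C"

sublocale abelian_category \<subseteq> preadditive_category
  using abelian unfolding abelian_def by unfold_locales blast

context abelian_category
begin

lemma exact_epi_factor:
  assumes "exact C a p" "epi C p"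
    and "g \<in> Arr C" "Dom C g = Cod C a" "Comp C g a = Zero C (Dom C a) (Cod C g)"
  shows "\<exists>u \<in> hom C (Cod C p) (Cod C g). Comp C u p = g"
proof -
  obtain k where "is_cokernel C k p"
    using abelian assms(2) unfolding abelian_def by blast
  then have k: "k \<in> Arr C" "Cod C k = Dom C p" "Comp C p k = Zero C (Dom C k) (Cod C p)"
    and universal: "\<forall>x \<in> Obj C. \<forall>g \<in> hom C (Cod C k) x. Comp C g k = Zero C (Dom C k) x \<longrightarrow>
        (\<exists>!u. u \<in> hom C (Cod C p) x \<and> Comp C u p = g)"
    unfolding is_cokernel_def by auto
  have "Cod C a = Dom C p"
    using assms(1) unfolding exact_def by simp
  have "Comp C g k = Zero C (Dom C k) (Cod C g)"
    by (rule exact_vanish_on_kernel[OF assms(1,3-5)]) (use k in simp_all)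
  moreover have "g \<in> hom C (Cod C k) (Cod C g)"
    using assms(3,4) k(2) \<open>Cod C a = Dom C p\<close> unfolding hom_def by simp
  ultimately show ?thesis
    using universal assms(3) by (meson cod_in_Obj)
qed

lemma extension_if_surj_precomp:
  assumes a: "a \<in> hom C Q1 P1" and p1: "p1 \<in> hom C P1 F1"
    and d: "d \<in> hom C Q2 P2" and p2: "p2 \<in> hom C P2 F2"
    and c: "c \<in> hom C P1 P2" and h: "h \<in> hom C F1 F2"
    and ex1: "exact C a p1" and epi1: "epi C p1" and p2d: "Comp C p2 d = Zero C Q2 F2"
    and comm: "Comp C h p1 = Comp C p2 c"
    and surj: "\<forall>\<psi>' \<in> hom C F1 M. \<exists>\<psi> \<in> hom C F2 M. Comp C \<psi> h = \<psi>'"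
    and f: "f \<in> hom C P1 M" and fa: "Comp C f a = Zero C Q1 M"
  shows "\<exists>\<gamma> \<in> hom C P2 M. Comp C \<gamma> c = f \<and> Comp C \<gamma> d = Zero C Q2 M"
proof -
  note simps = in_homD[OF a] in_homD[OF p1] in_homD[OF d] in_homD[OF p2] in_homD[OF c]
    in_homD[OF h] in_homD[OF f]
  obtain u where u: "u \<in> hom C F1 M" "Comp C u p1 = f"
    using exact_epi_factor[OF ex1 epi1, of f] fa by (auto simp: simps)
  with surj obtain \<psi> where \<psi>: "\<psi> \<in> hom C F2 M" "Comp C \<psi> h = u"
    by blast
  have "Comp C \<psi> (Comp C p2 c) = Comp C \<psi> (Comp C h p1)"
    by (simp only: comm)
  then have "Comp C (Comp C \<psi> p2) c = Comp C (Comp C \<psi> h) p1"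
    using \<psi>(1) by (simp add: hom_def simps)
  also have "\<dots> = f"
    using \<psi>(2) u(2) by simp
  finally have \<gamma>c: "Comp C (Comp C \<psi> p2) c = f" .
  have "Comp C (Comp C \<psi> p2) d = Comp C \<psi> (Comp C p2 d)"
    using \<psi>(1) by (simp add: hom_def simps)
  also have "\<dots> = Zero C Q2 M"
    using \<psi>(1) p2d by (simp add: hom_def simps)
  finally have \<gamma>d: "Comp C (Comp C \<psi> p2) d = Zero C Q2 M" .
  have "Comp C \<psi> p2 \<in> hom C P2 M"
    using \<psi>(1) by (simp add: hom_def simps)
  with \<gamma>c \<gamma>d show ?thesis
    by blast
qed

lemma surj_precomp_if_extension:
  assumes a: "a \<in> hom C Q1 P1" and p1: "p1 \<in> hom C P1 F1"
    and d: "d \<in> hom C Q2 P2" and p2: "p2 \<in> hom C P2 F2"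
    and c: "c \<in> hom C P1 P2" and h: "h \<in> hom C F1 F2"
    and p1a: "Comp C p1 a = Zero C Q1 F1" and epi1: "epi C p1" and ex2: "exact C d p2" and epi2: "epi C p2"
    and comm: "Comp C h p1 = Comp C p2 c"
    and extension: "\<forall>f \<in> hom C P1 M. Comp C f a = Zero C Q1 M \<longrightarrow>
      (\<exists>\<gamma> \<in> hom C P2 M. Comp C \<gamma> c = f \<and> Comp C \<gamma> d = Zero C Q2 M)"
    and u: "u \<in> hom C F1 M"
  shows "\<exists>\<psi> \<in> hom C F2 M. Comp C \<psi> h = u"
proof -
  note simps = in_homD[OF a] in_homD[OF p1] in_homD[OF d] in_homD[OF p2] in_homD[OF c]
    in_homD[OF h] in_homD[OF u]
  have "Comp C u (Comp C p1 a) = Zero C Q1 M"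
    using p1a by (simp add: simps)
  then have "Comp C u p1 \<in> hom C P1 M" "Comp C (Comp C u p1) a = Zero C Q1 M"
    by (simp_all add: hom_def simps)
  with extension obtain \<gamma>
    where \<gamma>: "\<gamma> \<in> hom C P2 M" "Comp C \<gamma> c = Comp C u p1" "Comp C \<gamma> d = Zero C Q2 M"
    by blast
  obtain \<psi> where \<psi>: "\<psi> \<in> hom C F2 M" "Comp C \<psi> p2 = \<gamma>"
    using exact_epi_factor[OF ex2 epi2, of \<gamma>] \<gamma> by (auto simp: hom_def simps)
  have "Comp C \<psi> (Comp C h p1) = Comp C \<psi> (Comp C p2 c)"
    by (simp only: comm)
  then have "Comp C (Comp C \<psi> h) p1 = Comp C (Comp C \<psi> p2) c"
    using \<psi>(1) by (simp add: hom_def simps)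
  also have "\<dots> = Comp C u p1"
    using \<psi>(2) \<gamma>(2) by simp
  finally have "Comp C (Comp C \<psi> h) p1 = Comp C u p1" .
  moreover have "Comp C \<psi> h \<in> hom C F1 M"
    using \<psi>(1) by (simp add: hom_def simps)
  moreover have "\<forall>x \<in> Obj C. \<forall>g \<in> hom C F1 x. \<forall>g' \<in> hom C F1 x. Comp C g p1 = Comp C g' p1 \<longrightarrow> g = g'"
    using epi1 unfolding epi_def by (simp add: simps)
  ultimately have "Comp C \<psi> h = u"
    using u in_homD(5)[OF u] by blast
  with \<psi>(1) show ?thesis
    by blast
qed

end

theorem lemma3p4:
  fixes C :: "('o, 'm) acat"
    and Q1 P1 F1 Q2 P2 F2 M S1 S2 :: 'o
    and a p1 d p2 b c h i1 i2 r1 r2 j1 j2 s1 s2 :: 'm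
  assumes ab: "abelian C"
    and a: "a \<in> hom C Q1 P1" and p1: "p1 \<in> hom C P1 F1"
    and d: "d \<in> hom C Q2 P2" and p2: "p2 \<in> hom C P2 F2"
    and b: "b \<in> hom C Q1 Q2" and c: "c \<in> hom C P1 P2" and h: "h \<in> hom C F1 F2"
    and ex1: "exact C a p1" and epi1: "epi C p1"
    and ex2: "exact C d p2" and epi2: "epi C p2"
    and comm1: "Comp C c a = Comp C d b"
    and comm2: "Comp C h p1 = Comp C p2 c"
    and M: "M \<in> Obj C"
    and S1: "is_biproduct C Q1 Q2 S1 i1 i2 r1 r2"
    and S2: "is_biproduct C P1 Q2 S2 j1 j2 s1 s2"
  shows "let \<mu> = Add C (Comp C j1 (Comp C a r1))
                   (Add C (Comp C j2 (Comp C b r1)) (Neg C (Comp C j2 r2)));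
             \<nu> = Add C (Comp C c s1) (Neg C (Comp C d s2))
         in (\<forall>\<psi>' \<in> hom C F1 M. \<exists>\<psi> \<in> hom C F2 M. Comp C \<psi> h = \<psi>')
            \<longleftrightarrow> (\<forall>\<phi> \<in> hom C S2 M. Comp C \<phi> \<mu> = Zero C S1 M \<longrightarrow>
                   (\<exists>\<gamma> \<in> hom C P2 M. Comp C \<gamma> \<nu> = \<phi>))"
proof -
  interpret abelian_category C
    by (rule abelian_category.intro) (fact ab)
  have p1a: "Comp C p1 a = Zero C Q1 F1" and p2d: "Comp C p2 d = Zero C Q2 F2"
    using exact_comp_eq_zero ex1 a p1 ex2 d p2 by blast+
  have "(\<forall>\<psi>' \<in> hom C F1 M. \<exists>\<psi> \<in> hom C F2 M. Comp C \<psi> h = \<psi>') \<longleftrightarrow>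
    (\<forall>f \<in> hom C P1 M. Comp C f a = Zero C Q1 M \<longrightarrow>
      (\<exists>\<gamma> \<in> hom C P2 M. Comp C \<gamma> c = f \<and> Comp C \<gamma> d = Zero C Q2 M))"
    using extension_if_surj_precomp[OF a p1 d p2 c h ex1 epi1 p2d comm2]
      surj_precomp_if_extension[OF a p1 d p2 c h p1a epi1 ex2 epi2 comm2]
    by blast
  then show ?thesis
    unfolding Let_def using biproduct_factorization_iff_extension[OF a b c d M S1 S2]
    by blast
qed

end
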